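(* Assume condition (H). Then the convex quadrangle inequality $$d_{i,l}+d_{j,k}\le d_{i,k}+d_{j,l}$$ holds for all $i,j,k,l\in\mathbb{N}\cup\{-1\}$ with $i\le j\le k\le l$. Moreover, for all $m,n\in\mathbb{N}$ with $m\le n$, the transport plan produced by the Inside-Out procedure for $(\pi^m,\pi^n)$ is an optimal solution of the minimization problem defining $d_{m,n}$.
   Context: Let $\mathbb{N}=\{0,1,2,\dots\}$. Fix a sequence $(\pi^n)_{n\in\mathbb{N}}$ where each $\pi^n=(\pi^n_i)_{i\in\mathbb{N}}$ is a probability distribution on $\mathbb{N}$ with support contained in $\{0,\dots,n\}$, and $\pi^n\ne\pi^m$ for $m\ne n$. Define reals $d_{m,n}$ for $m,n\in\mathbb{N}\cup\{-1\}$ recursively as follows: $d_{-1,-1}=0$, $d_{-1,j}=d_{j,-1}=1$ for $j\in\mathbb{N}$, and for $m,n\in\mathbb{N}$, $$d_{m,n}=\min_{z\in\mathcal{F}_{m,n}}\sum_{i=0}^m\sum_{j=0}^n z_{i,j}\,d_{i-1,j-1},$$ where $\mathcal{F}_{m,n}$ is the set of transport plans from $\pi^m$ to $\pi^n$, i.e. arrays $z=(z_{i,j})_{0\le i\le m,\,0\le j\le n}$ with $z_{i,j}\ge0$, $\sum_{j=0}^n z_{i,j}=\pi^m_i$ for all $i\le m$, and $\sum_{i=0}^m z_{i,j}=\pi^n_j$ for all $j\le n$. Condition (H) means: for every $n\ge1$, $\pi^n_n>0$ and $0\le\pi^n_i\le\pi^{n-1}_i$ for all $i<n$. Inside-Out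 procedure (input $\pi^m,\pi^n$ with $m\le n$): (1) for each $i=0,\dots,m$ set $z_{i,i}=\pi^n_i$ and $z_{j,i}=0$ for $j\ne i$, and compute the residual supply $\sigma_i=\pi^m_i-\pi^n_i$; (2) the remaining demands are $\pi^n_j$ at the nodes $j=m+1,\dots,n$; process the supply nodes in the order $i=m,m-1,\dots,0$, and use $\sigma_i$ to fill the still-unmet demands at nodes $j>m$ in increasing order of $j$ (starting at the first node whose demand is not yet completely met, which may have been partially filled by the previous supply node), setting $z_{i,j}$ equal to the amount sent from $i$ to $j$, until $\sigma_i$ is depleted; all other entries of $z$ are $0$. *)

theory Defs
  imports Complex_Main
begin

text \<open>A sequence of distributions is a map p :: nat => nat => real, p n i = p^n_i.\<close>

definition transport_plans :: "(nat \<Rightarrow> nat \<Rightarrow> real) \<Rightarrow> nat \<Rightarrow> nat \<Rightarrow> (nat \<Rightarrow> nat \<Rightarrow> real) set" where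
  "transport_plans p m n =
     {z. (\<forall>i j. (i > m \<or> j > n) \<longrightarrow> z i j = 0)
       \<and> (\<forall>i\<le>m. \<forall>j\<le>n. 0 \<le> z i j)
       \<and> (\<forall>i\<le>m. (\<Sum>j\<le>n. z i j) = p m i)
       \<and> (\<forall>j\<le>n. (\<Sum>i\<le>m. z i j) = p n j)}"

text \<open>Shifted table: D p a b = d_{a-1,b-1}, so D p 0 _ / D p _ 0 are the index -1 entries.\<close>

function D :: "(nat \<Rightarrow> nat \<Rightarrow> real) \<Rightarrow> nat \<Rightarrow> nat \<Rightarrow> real" where
  "D p 0 0 = 0"
| "D p 0 (Suc n) = 1"
| "D p (Suc m) 0 = 1"
| "D p (Suc m) (Suc n) =
     Inf ((\<lambda>z. \<Sum>i\<le>m. \<Sum>j\<le>n. z i j * D p i j) ` transport_plans p m n)"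
  by pat_completeness auto
termination
  by (relation "measure (\<lambda>(p, a, b). a + b)") auto

definition d :: "(nat \<Rightarrow> nat \<Rightarrow> real) \<Rightarrow> int \<Rightarrow> int \<Rightarrow> real" where
  "d p m n = D p (nat (m + 1)) (nat (n + 1))"

definition plan_cost :: "(nat \<Rightarrow> nat \<Rightarrow> real) \<Rightarrow> nat \<Rightarrow> nat \<Rightarrow> (nat \<Rightarrow> nat \<Rightarrow> real) \<Rightarrow> real" where
  "plan_cost p m n z = (\<Sum>i\<le>m. \<Sum>j\<le>n. z i j * d p (int i - 1) (int j - 1))"

definition is_distribution_seq :: "(nat \<Rightarrow> nat \<Rightarrow> real) \<Rightarrow> bool" where
  "is_distribution_seq p \<longleftrightarrow>
     (\<forall>n i. 0 \<le> p n i) \<and> (\<forall>n. (\<Sum>i\<le>n. p n i) = 1) \<and> (\<forall>n i. n < i \<longrightarrow> p n i = 0)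
     \<and> (\<forall>m n. m \<noteq> n \<longrightarrow> p m \<noteq> p n)"

definition condH :: "(nat \<Rightarrow> nat \<Rightarrow> real) \<Rightarrow> bool" where
  "condH p \<longleftrightarrow> (\<forall>n\<ge>1. p n n > 0 \<and> (\<forall>i<n. 0 \<le> p n i \<and> p n i \<le> p (n - 1) i))"

text \<open>Step (2): greedy filling of the demands at j > m, supply nodes processed in
  the order m, m-1, ..., 0, demand nodes in increasing order.  The greedy assigns to supply node i
  the interval [A_i, A_i + sigma_i) of cumulative supply, where A_i = sum_{k=i+1..m} sigma_k, and to
  demand node j the interval [B_j, B_j + p^n_j), B_j = sum_{l=m+1..j-1} p^n_l; the amount sent
  from i to j is the length of the overlap of these intervals.\<close>

definition io_sigma :: "(nat \<Rightarrow> nat \<Rightarrow> real) \<Rightarrow> nat \<Rightarrow> nat \<Rightarrow> nat \<Rightarrow> real" where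
  "io_sigma p m n i = p m i - p n i"

definition inside_out :: "(nat \<Rightarrow> nat \<Rightarrow> real) \<Rightarrow> nat \<Rightarrow> nat \<Rightarrow> nat \<Rightarrow> nat \<Rightarrow> real" where
  "inside_out p m n i j =
     (if i \<le> m \<and> j \<le> m then (if i = j then p n i else 0)
      else if i \<le> m \<and> m < j \<and> j \<le> n then
        (let A = (\<Sum>k\<in>{i<..m}. io_sigma p m n k);
             B = (\<Sum>l\<in>{m<..<j}. p n l)
         in max 0 (min (A + io_sigma p m n i) (B + p n j) - max A B))
      else 0)"

end

theory Submission
  imports Defs
begin

(*
  Write D m n for d (m - 1) (n - 1). By induction on N, D is monotone Monge up to N: its rows
  decrease towards the diagonal and its mixed differences are nonpositive above the diagonal.
  For such a cost the Inside-Out plan for (pi^m, pi^N) is optimal, as certified by dual potentials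
  built from the row differences of the cost at the demand nodes where consecutive supply blocks
  meet; so D (m + 1) (N + 1) is the cost of that plan. The cost of an upper-triangular plan is
  linear in its cross masses (the mass sent from {..x} to {y<..}), with the costs c a (a + 1) and
  the mixed differences as coefficients, and for Inside-Out plans these masses are explicit in the
  cumulative distributions.
  Condition (H) makes them satisfy a quadrangle inequality in (m, n), which carries the Monge
  property to column N + 1. Monotonicity carries over because redirecting to node m + 1 the supply
  that pi^(m+1) removes from the nodes k <= m turns the Inside-Out plan for (m, N) into a plan for
  (m + 1, N) that is no more expensive.
*)

definition overlap :: "real \<Rightarrow> real \<Rightarrow> real \<Rightarrow> real \<Rightarrow> real" where
  "overlap a b x y = max 0 (min b y - max a x)"

lemma overlap_commute: "overlap a b x y = overlap x y a b"
  by (simp add: overlap_def min.commute max.commute)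

lemma overlap_uminus: "overlap (- b) (- a) (- y) (- x) = overlap a b x y"
  by (simp add: overlap_def min_def max_def)

lemma overlap_eq_clamp:
  "a \<le> b \<Longrightarrow> x \<le> y \<Longrightarrow> overlap a b x y = min b (max a y) - min b (max a x)"
  by (simp add: overlap_def min_def max_def)

lemma overlap_subinterval: "a \<le> x \<Longrightarrow> x \<le> y \<Longrightarrow> y \<le> b \<Longrightarrow> overlap a b x y = y - x"
  by (simp add: overlap_def min_def max_def)

lemma sum_overlap_incseq:
  assumes "a \<le> b" "r \<le> s" "\<And>k. k \<in> {r..<s} \<Longrightarrow> f k \<le> f (Suc k)"
  shows "(\<Sum>k=r..<s. overlap a b (f k) (f (Suc k))) = overlap a b (f r) (f s)"
proof -
  have "0 \<le> (\<Sum>k=r..<s. f (Suc k) - f k)"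
    using assms(3) by (intro sum_nonneg) simp
  then have "f r \<le> f s"
    using sum_Suc_diff'[OF \<open>r \<le> s\<close>, of f] by simp
  then show ?thesis
    using assms sum_Suc_diff'[OF \<open>r \<le> s\<close>, of "\<lambda>k. min b (max a (f k))"]
    by (simp add: overlap_eq_clamp)
qed

lemma sum_overlap_decseq:
  assumes "a \<le> b" "r \<le> s" "\<And>k. k \<in> {r..<s} \<Longrightarrow> f (Suc k) \<le> f k"
  shows "(\<Sum>k=r..<s. overlap a b (f (Suc k)) (f k)) = overlap a b (f s) (f r)"
  using sum_overlap_incseq[of "- b" "- a" r s "\<lambda>k. - f k"] assms by (simp add: overlap_uminus)

lemma sum_atMost_split:
  fixes a N :: nat
  assumes "a \<le> N"
  shows "(\<Sum>j\<le>N. f j) = (\<Sum>j\<le>a. f j) + (\<Sum>j\<in>{a<..N}. f j)"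
proof -
  have "sum f ({..a} \<union> {a<..N}) = sum f {..a} + sum f {a<..N}"
    by (rule sum.union_disjoint) auto
  then show ?thesis
    using ivl_disj_un_one(3)[OF assms] by simp
qed

lemma sum_telescope_down:
  fixes f :: "nat \<Rightarrow> 'a::ab_group_add"
  shows "i \<le> k \<Longrightarrow> (\<Sum>r=i..<k. f r - f (Suc r)) = f i - f k"
  using sum_Suc_diff'[of i k "\<lambda>r. - f r"] by simp

lemma sum_nested_swap:
  "(\<Sum>i\<in>A. \<Sum>j\<in>B. \<Sum>k\<in>C. f i j k) = (\<Sum>k\<in>C. \<Sum>i\<in>A. \<Sum>j\<in>B. f i j k)"
proof -
  have "(\<Sum>i\<in>A. \<Sum>j\<in>B. \<Sum>k\<in>C. f i j k) = (\<Sum>i\<in>A. \<Sum>k\<in>C. \<Sum>j\<in>B. f i j k)"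
    by (intro sum.cong refl sum.swap)
  also have "\<dots> = (\<Sum>k\<in>C. \<Sum>i\<in>A. \<Sum>j\<in>B. f i j k)"
    by (rule sum.swap)
  finally show ?thesis .
qed

definition transport_cost :: "(nat \<Rightarrow> nat \<Rightarrow> real) \<Rightarrow> nat \<Rightarrow> nat \<Rightarrow> (nat \<Rightarrow> nat \<Rightarrow> real) \<Rightarrow> real" where
  "transport_cost c m n z = (\<Sum>i\<le>m. \<Sum>j\<le>n. z i j * c i j)"

lemma transport_cost_extend:
  assumes "\<And>i j. m < i \<Longrightarrow> z i j = 0" "\<And>i j. n < j \<Longrightarrow> z i j = 0" "m \<le> M" "n \<le> N"
  shows "transport_cost c M N z = transport_cost c m n z"
  unfolding transport_cost_def
proof (rule sum.mono_neutral_cong_left[symmetric])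
  show "\<forall>i\<in>{..M} - {..m}. (\<Sum>j\<le>N. z i j * c i j) = 0"
    using assms(1) by simp
  show "(\<Sum>j\<le>n. z i j * c i j) = (\<Sum>j\<le>N. z i j * c i j)" for i
    using assms(2,4) by (intro sum.mono_neutral_left) auto
qed (use assms(3) in auto)

lemma transport_cost_nonneg:
  assumes "z \<in> transport_plans p m n" "\<And>i j. i \<le> m \<Longrightarrow> j \<le> n \<Longrightarrow> 0 \<le> c i j"
  shows "0 \<le> transport_cost c m n z"
  using assms unfolding transport_cost_def transport_plans_def
  by (intro sum_nonneg mult_nonneg_nonneg) auto

lemma transport_cost_potentials:
  assumes "z \<in> transport_plans p m n"
  shows "transport_cost (\<lambda>i j. u i + v j) m n z = (\<Sum>i\<le>m. p m i * u i) + (\<Sum>j\<le>n. p n j * v j)"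
proof -
  have rows: "\<And>i. i \<le> m \<Longrightarrow> (\<Sum>j\<le>n. z i j) = p m i"
    and cols: "\<And>j. j \<le> n \<Longrightarrow> (\<Sum>i\<le>m. z i j) = p n j"
    using assms unfolding transport_plans_def by auto
  have "transport_cost (\<lambda>i j. u i + v j) m n z
      = (\<Sum>i\<le>m. (\<Sum>j\<le>n. z i j) * u i) + (\<Sum>i\<le>m. \<Sum>j\<le>n. z i j * v j)"
    unfolding transport_cost_def by (simp add: distrib_left sum.distrib sum_distrib_right)
  also have "(\<Sum>i\<le>m. \<Sum>j\<le>n. z i j * v j) = (\<Sum>j\<le>n. (\<Sum>i\<le>m. z i j) * v j)"
    by (subst sum.swap) (simp add: sum_distrib_right)
  finally show ?thesis
    by (simp add: rows cols)
qed

lemma transport_cost_le_of_potentials: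
  assumes w: "w \<in> transport_plans p m n" and z: "z \<in> transport_plans p m n"
    and feasible: "\<And>i j. i \<le> m \<Longrightarrow> j \<le> n \<Longrightarrow> u i + v j \<le> c i j"
    and slack: "\<And>i j. i \<le> m \<Longrightarrow> j \<le> n \<Longrightarrow> w i j \<noteq> 0 \<Longrightarrow> u i + v j = c i j"
  shows "transport_cost c m n w \<le> transport_cost c m n z"
proof -
  have "transport_cost c m n w = transport_cost (\<lambda>i j. u i + v j) m n w"
    unfolding transport_cost_def by (intro sum.cong refl) (metis atMost_iff mult_zero_left slack)
  also have "\<dots> = transport_cost (\<lambda>i j. u i + v j) m n z"
    using w z by (simp add: transport_cost_potentials)
  also have "\<dots> \<le> transport_cost c m n z"
    using z feasible unfolding transport_cost_def transport_plans_def
    by (intro sum_mono mult_left_mono) auto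
  finally show ?thesis .
qed

section \<open>Mixed differences and the Monge property\<close>

definition mixed_diff :: "(nat \<Rightarrow> nat \<Rightarrow> real) \<Rightarrow> nat \<Rightarrow> nat \<Rightarrow> real" where
  "mixed_diff c x y = c x (Suc y) - c (Suc x) (Suc y) - c x y + c (Suc x) y"

lemma sum_mixed_diff_rectangle:
  assumes "a \<le> b" "r \<le> s"
  shows "(\<Sum>y=r..<s. \<Sum>x=a..<b. mixed_diff c x y) = c a s - c b s - c a r + c b r"
proof -
  have column: "(\<Sum>x=a..<b. mixed_diff c x y) = (c a (Suc y) - c b (Suc y)) - (c a y - c b y)" for y
  proof -
    have "(\<Sum>x=a..<b. mixed_diff c x y)
        = (\<Sum>x=a..<b. c x (Suc y) - c (Suc x) (Suc y)) - (\<Sum>x=a..<b. c x y - c (Suc x) y)"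
      by (simp add: mixed_diff_def sum_subtractf sum.distrib)
    also have "\<dots> = (c a (Suc y) - c b (Suc y)) - (c a y - c b y)"
      by (simp only: sum_telescope_down[OF assms(1), of "\<lambda>x. c x (Suc y)"]
          sum_telescope_down[OF assms(1), of "\<lambda>x. c x y"])
    finally show ?thesis .
  qed
  show ?thesis
    using sum_Suc_diff'[OF assms(2), of "\<lambda>y. c a y - c b y"] by (simp add: column)
qed

lemma quadrangle_of_mixed_diff_nonpos:
  assumes "\<And>x y. a \<le> x \<Longrightarrow> x < y \<Longrightarrow> y < e \<Longrightarrow> mixed_diff c x y \<le> 0"
    and "a \<le> b" "b \<le> r" "r \<le> e"
  shows "c a e + c b r \<le> c a r + c b e"
proof -
  have "(\<Sum>y=r..<e. \<Sum>x=a..<b. mixed_diff c x y) \<le> 0"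
    using assms by (intro sum_nonpos) auto
  then show ?thesis
    using sum_mixed_diff_rectangle[OF assms(2), of r e c] assms(4) by simp
qed

lemma cost_expansion:
  assumes "\<And>k. i \<le> k \<Longrightarrow> k \<le> j \<Longrightarrow> c k k = 0" "i \<le> j"
  shows "c i j = (\<Sum>a=i..<j. c a (Suc a)) + (\<Sum>y=i..<j. \<Sum>x=i..<y. mixed_diff c x y)"
proof -
  have "(\<Sum>x=i..<y. mixed_diff c x y) = (c i (Suc y) - c i y) - c y (Suc y)" if "y \<in> {i..<j}" for y
    using sum_mixed_diff_rectangle[of i y y "Suc y" c] assms(1)[of y] that by simp
  then have "(\<Sum>y=i..<j. \<Sum>x=i..<y. mixed_diff c x y)
      = (\<Sum>y=i..<j. c i (Suc y) - c i y) - (\<Sum>y=i..<j. c y (Suc y))"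
    by (simp add: sum_subtractf)
  then show ?thesis
    using sum_Suc_diff'[OF assms(2), of "c i"] assms(1)[of i] assms(2) by simp
qed

lemma plan_entry_cost_expansion:
  assumes "\<And>k. k \<le> N \<Longrightarrow> c k k = 0" "\<And>i j. j < i \<Longrightarrow> z i j = 0" "i \<le> N" "j \<le> N"
  shows "z i j * c i j
       = (\<Sum>a<N. (if i \<le> a \<and> a < j then z i j else 0) * c a (Suc a))
       + (\<Sum>y<N. \<Sum>x<y. (if i \<le> x \<and> y < j then z i j else 0) * mixed_diff c x y)"
proof (cases "i \<le> j")
  case True
  have if_mult: "(if P then u else 0) * v = u * (if P then v else 0)" for P and u v :: real
    by simp
  have "(\<Sum>a=i..<j. c a (Suc a)) = (\<Sum>a<N. if i \<le> a \<and> a < j then c a (Suc a) else 0)"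
    using assms(4) by (intro sum.mono_neutral_cong_left) auto
  moreover have "(\<Sum>y=i..<j. \<Sum>x=i..<y. mixed_diff c x y)
      = (\<Sum>y<N. \<Sum>x<y. if i \<le> x \<and> y < j then mixed_diff c x y else 0)"
    using assms(4) by (intro sum.mono_neutral_cong_left sum.mono_neutral_cong_left) auto
  ultimately show ?thesis
    using cost_expansion[of i j c] assms True
    by (simp add: if_mult sum_distrib_left distrib_left)
next
  case False
  then have "(\<Sum>a<N. (if i \<le> a \<and> a < j then z i j else 0) * c a (Suc a)) = 0"
    "(\<Sum>y<N. \<Sum>x<y. (if i \<le> x \<and> y < j then z i j else 0) * mixed_diff c x y) = 0"
    by (auto intro!: sum.neutral)
  then show ?thesis
    using assms(2) False by simp
qed

definition cross_mass :: "(nat \<Rightarrow> nat \<Rightarrow> real) \<Rightarrow> nat \<Rightarrow> nat \<Rightarrow> nat \<Rightarrow> real" where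
  "cross_mass z N x y = (\<Sum>i\<le>x. \<Sum>j\<in>{y<..N}. z i j)"

lemma cross_mass_indicator:
  assumes "x \<le> N"
  shows "(\<Sum>i\<le>N. \<Sum>j\<le>N. if i \<le> x \<and> y < j then z i j else 0) = cross_mass z N x y"
proof -
  have "(\<Sum>j\<le>N. if i \<le> x \<and> y < j then z i j else 0) = (if i \<le> x then (\<Sum>j\<in>{y<..N}. z i j) else 0)" for i
    by (simp add: sum.inter_filter[symmetric]) (intro impI sum.cong; auto)
  then show ?thesis
    using assms unfolding cross_mass_def
    by (simp add: sum.inter_filter[symmetric]) (intro sum.cong; auto)
qed

lemma transport_cost_expansion:
  assumes diag: "\<And>k. k \<le> N \<Longrightarrow> c k k = 0" and upper: "\<And>i j. j < i \<Longrightarrow> z i j = 0"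
  shows "transport_cost c N N z
       = (\<Sum>a<N. c a (Suc a) * cross_mass z N a a)
       + (\<Sum>y<N. \<Sum>x<y. mixed_diff c x y * cross_mass z N x y)"
proof -
  define I where "I i j x y = (if i \<le> x \<and> y < j then z i j else 0)" for i j x y
  have entry: "z i j * c i j
      = (\<Sum>a<N. I i j a a * c a (Suc a)) + (\<Sum>y<N. \<Sum>x<y. I i j x y * mixed_diff c x y)"
    if "i \<le> N" "j \<le> N" for i j
    unfolding I_def by (rule plan_entry_cost_expansion) (use diag upper that in auto)
  have "transport_cost c N N z
      = (\<Sum>i\<le>N. \<Sum>j\<le>N. (\<Sum>a<N. I i j a a * c a (Suc a))
          + (\<Sum>y<N. \<Sum>x<y. I i j x y * mixed_diff c x y))"
    unfolding transport_cost_def by (intro sum.cong refl entry) auto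
  also have "\<dots> = (\<Sum>i\<le>N. \<Sum>j\<le>N. \<Sum>a<N. I i j a a * c a (Suc a))
      + (\<Sum>i\<le>N. \<Sum>j\<le>N. \<Sum>y<N. \<Sum>x<y. I i j x y * mixed_diff c x y)"
    by (simp only: sum.distrib)
  also have "\<dots> = (\<Sum>a<N. \<Sum>i\<le>N. \<Sum>j\<le>N. I i j a a * c a (Suc a))
      + (\<Sum>y<N. \<Sum>x<y. \<Sum>i\<le>N. \<Sum>j\<le>N. I i j x y * mixed_diff c x y)"
  proof -
    have "(\<Sum>i\<le>N. \<Sum>j\<le>N. \<Sum>y<N. \<Sum>x<y. I i j x y * mixed_diff c x y)
        = (\<Sum>y<N. \<Sum>i\<le>N. \<Sum>j\<le>N. \<Sum>x<y. I i j x y * mixed_diff c x y)"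
      by (rule sum_nested_swap)
    also have "\<dots> = (\<Sum>y<N. \<Sum>x<y. \<Sum>i\<le>N. \<Sum>j\<le>N. I i j x y * mixed_diff c x y)"
      by (intro sum.cong refl sum_nested_swap)
    finally show ?thesis
      by (simp only: sum_nested_swap[of "\<lambda>i j a. I i j a a * c a (Suc a)"])
  qed
  also have "\<dots> = (\<Sum>a<N. c a (Suc a) * cross_mass z N a a)
      + (\<Sum>y<N. \<Sum>x<y. mixed_diff c x y * cross_mass z N x y)"
  proof -
    have "(\<Sum>i\<le>N. \<Sum>j\<le>N. I i j x y * f) = f * cross_mass z N x y" if "x \<le> N" for x y f
      unfolding cross_mass_indicator[OF that, of y z, symmetric]
      by (simp add: I_def sum_distrib_left mult.commute)
    then show ?thesis
      by (intro arg_cong2[where f = "(+)"] sum.cong refl) auto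
  qed
  finally show ?thesis .
qed

definition monotone_monge_upto :: "(nat \<Rightarrow> nat \<Rightarrow> real) \<Rightarrow> nat \<Rightarrow> bool" where
  "monotone_monge_upto c N \<longleftrightarrow>
     (\<forall>x y. x < y \<longrightarrow> y \<le> N \<longrightarrow> c (Suc x) y \<le> c x y) \<and>
     (\<forall>x y. x < y \<longrightarrow> y < N \<longrightarrow> mixed_diff c x y \<le> 0)"

lemma monotone_monge_upto_row_antimono:
  assumes "monotone_monge_upto c N" "a \<le> b" "b \<le> y" "y \<le> N"
  shows "c b y \<le> c a y"
proof -
  have "0 \<le> (\<Sum>x=a..<b. c x y - c (Suc x) y)"
    using assms unfolding monotone_monge_upto_def by (intro sum_nonneg) auto
  then show ?thesis
    using sum_telescope_down[OF assms(2), of "\<lambda>x. c x y"] by simp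
qed

lemma monotone_monge_upto_quadrangle:
  assumes "monotone_monge_upto c N" "a \<le> b" "b \<le> r" "r \<le> e" "e \<le> N"
  shows "c a e + c b r \<le> c a r + c b e"
  using assms unfolding monotone_monge_upto_def
  by (intro quadrangle_of_mixed_diff_nonpos[OF _ assms(2-4)]) auto

lemma monotone_monge_upto_antimono:
  "monotone_monge_upto c N \<Longrightarrow> N' \<le> N \<Longrightarrow> monotone_monge_upto c N'"
  unfolding monotone_monge_upto_def by auto

locale nested_distributions =
  fixes p :: "nat \<Rightarrow> nat \<Rightarrow> real"
  assumes distribution_seq: "is_distribution_seq p"
    and condH: "condH p"
begin

lemma p_nonneg: "0 \<le> p n i"
  using distribution_seq by (simp add: is_distribution_seq_def)

lemma sum_p: "(\<Sum>i\<le>n. p n i) = 1"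
  using distribution_seq by (simp add: is_distribution_seq_def)

lemma p_eq_0: "n < i \<Longrightarrow> p n i = 0"
  using distribution_seq by (simp add: is_distribution_seq_def)

lemma sum_p_atMost: "n \<le> N \<Longrightarrow> (\<Sum>i\<le>N. p n i) = 1"
  using sum_atMost_split[of n N "p n"] by (simp add: sum_p p_eq_0)

lemma p_Suc_le: "i \<le> n \<Longrightarrow> p (Suc n) i \<le> p n i"
  using condH[unfolded condH_def, rule_format, of "Suc n"] by simp

lemma p_antimono: "k \<le> n \<Longrightarrow> i \<le> k \<Longrightarrow> p n i \<le> p k i"
proof (induction n rule: dec_induct)
  case (step n)
  then show ?case using p_Suc_le[of i n] by simp
qed simp

definition cdf :: "nat \<Rightarrow> nat \<Rightarrow> real" where
  "cdf k x = (\<Sum>i\<le>x. p k i)"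

lemma cdf_mono: "x \<le> y \<Longrightarrow> cdf k x \<le> cdf k y"
  unfolding cdf_def by (rule sum_mono2) (auto intro: p_nonneg)

lemma cdf_eq_1: "k \<le> x \<Longrightarrow> cdf k x = 1"
  unfolding cdf_def by (rule sum_p_atMost)

lemma cdf_le_1: "cdf k x \<le> 1"
  using cdf_mono[of x "max x k" k] cdf_eq_1[of k "max x k"] by simp

lemma cdf_split: "x \<le> y \<Longrightarrow> cdf k y = cdf k x + (\<Sum>i\<in>{x<..y}. p k i)"
  unfolding cdf_def by (rule sum_atMost_split)

lemma cdf_antimono: "k \<le> l \<Longrightarrow> cdf l x \<le> cdf k x"
proof (cases "x \<le> k")
  case True
  assume "k \<le> l"
  with True show ?thesis
    unfolding cdf_def by (intro sum_mono p_antimono) auto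
qed (simp add: cdf_eq_1 cdf_le_1)

lemma cdf_diff_antimono:
  assumes "x \<le> y" "y \<le> k" "k \<le> l"
  shows "cdf l y - cdf l x \<le> cdf k y - cdf k x"
  using assms by (simp add: cdf_split) (intro sum_mono p_antimono; simp)

end

locale inside_out_pair = nested_distributions +
  fixes m n :: nat
  assumes m_le_n: "m \<le> n"
begin

abbreviation io :: "nat \<Rightarrow> nat \<Rightarrow> real" where
  "io \<equiv> inside_out p m n"

abbreviation \<sigma> :: "nat \<Rightarrow> real" where
  "\<sigma> \<equiv> io_sigma p m n"

lemma sigma_nonneg: "i \<le> m \<Longrightarrow> 0 \<le> \<sigma> i"
  unfolding io_sigma_def using p_antimono[OF m_le_n, of i] by simp

(* supply_above (Suc i) and demand_below j are the A_i and B_j of the definition of inside_out. *)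

definition supply_above :: "nat \<Rightarrow> real" where
  "supply_above k = (\<Sum>l=k..m. \<sigma> l)"

definition demand_below :: "nat \<Rightarrow> real" where
  "demand_below j = (\<Sum>l\<in>{m<..<j}. p n l)"

definition excess :: real where
  "excess = (\<Sum>l\<in>{m<..n}. p n l)"

lemma excess_eq: "excess = 1 - cdf n m"
  using cdf_split[OF m_le_n, of n] cdf_eq_1[of n n] unfolding excess_def by simp

lemma supply_above_Suc: "k \<le> m \<Longrightarrow> supply_above k = \<sigma> k + supply_above (Suc k)"
  unfolding supply_above_def by (simp add: sum.atLeast_Suc_atMost)

lemma supply_above_Suc_m: "supply_above (Suc m) = 0"
  unfolding supply_above_def by simp

lemma supply_above_antimono: "k \<le> k' \<Longrightarrow> supply_above k' \<le> supply_above k"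
  unfolding supply_above_def by (rule sum_mono2) (auto intro: sigma_nonneg)

lemma supply_above_nonneg: "0 \<le> supply_above k"
  unfolding supply_above_def by (rule sum_nonneg) (auto intro: sigma_nonneg)

lemma supply_above_Suc_eq: "k \<le> m \<Longrightarrow> supply_above (Suc k) = excess - (cdf m k - cdf n k)"
proof -
  assume "k \<le> m"
  then have "supply_above (Suc k) = (cdf m m - cdf m k) - (cdf n m - cdf n k)"
    unfolding supply_above_def io_sigma_def
    by (simp add: cdf_split sum_subtractf atLeastSucAtMost_greaterThanAtMost)
  then show ?thesis
    using cdf_eq_1[of m m] excess_eq by simp
qed

lemma supply_above_0: "supply_above 0 = excess"
  using supply_above_Suc[of 0] supply_above_Suc_eq[of 0]
  by (simp add: io_sigma_def cdf_def)

lemma supply_above_le_excess: "supply_above k \<le> excess"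
  using supply_above_antimono[of 0 k] supply_above_0 by simp

lemma demand_below_Suc: "m < j \<Longrightarrow> demand_below (Suc j) = demand_below j + p n j"
proof -
  assume "m < j"
  then have "{m<..<Suc j} = insert j {m<..<j}" by auto
  then show ?thesis unfolding demand_below_def by simp
qed

lemma demand_below_Suc_eq: "m \<le> j \<Longrightarrow> demand_below (Suc j) = cdf n j - cdf n m"
proof -
  assume "m \<le> j"
  moreover have "{m<..<Suc j} = {m<..j}" by auto
  ultimately show ?thesis unfolding demand_below_def by (simp add: cdf_split)
qed

lemma demand_below_Suc_m: "demand_below (Suc m) = 0"
  using demand_below_Suc_eq[of m] by simp

lemma demand_below_Suc_n: "demand_below (Suc n) = excess"
  using demand_below_Suc_eq[OF m_le_n] cdf_eq_1[of n n] excess_eq by simp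

lemma demand_below_nonneg: "0 \<le> demand_below j"
  unfolding demand_below_def by (rule sum_nonneg) (auto intro: p_nonneg)

lemma demand_below_mono: "j \<le> j' \<Longrightarrow> demand_below j \<le> demand_below j'"
  unfolding demand_below_def by (rule sum_mono2) (auto intro: p_nonneg)

lemma demand_below_le_excess: "j \<le> Suc n \<Longrightarrow> demand_below j \<le> excess"
  using demand_below_mono[of j "Suc n"] demand_below_Suc_n by simp

lemma inside_out_offdiag:
  assumes "i \<le> m" "m < j" "j \<le> n"
  shows "io i j = overlap (supply_above (Suc i)) (supply_above i) (demand_below j) (demand_below (Suc j))"
proof -
  have "(\<Sum>k\<in>{i<..m}. \<sigma> k) = supply_above (Suc i)"
    unfolding supply_above_def by (simp add: atLeastSucAtMost_greaterThanAtMost)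
  moreover have "supply_above (Suc i) + \<sigma> i = supply_above i"
    using supply_above_Suc[OF assms(1)] by simp
  moreover have "(\<Sum>l\<in>{m<..<j}. p n l) = demand_below j"
    unfolding demand_below_def ..
  ultimately show ?thesis
    using assms unfolding inside_out_def Let_def by (simp add: demand_below_Suc overlap_def)
qed

lemma inside_out_diag_block: "i \<le> m \<Longrightarrow> j \<le> m \<Longrightarrow> io i j = (if i = j then p n i else 0)"
  unfolding inside_out_def by simp

lemma inside_out_row_outside: "m < i \<Longrightarrow> io i j = 0"
  unfolding inside_out_def by auto

lemma inside_out_col_outside: "n < j \<Longrightarrow> io i j = 0"
  using m_le_n unfolding inside_out_def by auto

lemma inside_out_lower: "j < i \<Longrightarrow> io i j = 0"
  unfolding inside_out_def by auto

lemma inside_out_nonneg: "0 \<le> io i j"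
  unfolding inside_out_def Let_def by (auto intro: p_nonneg)

lemma inside_out_row_tail:
  assumes "i \<le> m"
  shows "(\<Sum>j\<in>{m<..n}. io i j) = \<sigma> i"
proof -
  have "(\<Sum>j\<in>{m<..n}. io i j)
      = (\<Sum>j=Suc m..<Suc n. overlap (supply_above (Suc i)) (supply_above i) (demand_below j) (demand_below (Suc j)))"
    using assms by (intro sum.cong) (auto simp: inside_out_offdiag)
  also have "\<dots> = overlap (supply_above (Suc i)) (supply_above i) (demand_below (Suc m)) (demand_below (Suc n))"
    using m_le_n supply_above_antimono[of i "Suc i"]
    by (intro sum_overlap_incseq) (auto simp: demand_below_Suc p_nonneg)
  also have "\<dots> = supply_above i - supply_above (Suc i)"
    unfolding demand_below_Suc_m demand_below_Suc_n
    by (subst overlap_commute, rule overlap_subinterval)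
      (use supply_above_nonneg supply_above_antimono[of i "Suc i"] supply_above_le_excess in auto)
  finally show ?thesis
    using supply_above_Suc[OF assms] by simp
qed

lemma inside_out_row_sum: "(\<Sum>j\<le>n. io i j) = p m i"
proof (cases "i \<le> m")
  case True
  have "(\<Sum>j\<le>m. io i j) = p n i"
    using True by (simp add: inside_out_diag_block)
  then show ?thesis
    using sum_atMost_split[OF m_le_n, of "io i"] inside_out_row_tail[OF True]
    by (simp add: io_sigma_def)
qed (simp add: inside_out_row_outside p_eq_0)

lemma inside_out_col_offdiag:
  assumes "m < j" "j \<le> n"
  shows "(\<Sum>i\<le>m. io i j) = p n j"
proof -
  have "(\<Sum>i\<le>m. io i j)
      = (\<Sum>i=0..<Suc m. overlap (demand_below j) (demand_below (Suc j)) (supply_above (Suc i)) (supply_above i))"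
    using assms by (intro sum.cong) (auto simp: inside_out_offdiag overlap_commute)
  also have "\<dots> = overlap (demand_below j) (demand_below (Suc j)) (supply_above (Suc m)) (supply_above 0)"
    using demand_below_mono[of j "Suc j"]
    by (intro sum_overlap_decseq) (auto intro: supply_above_antimono)
  also have "\<dots> = demand_below (Suc j) - demand_below j"
    unfolding supply_above_Suc_m supply_above_0
    by (subst overlap_commute, rule overlap_subinterval)
      (use assms demand_below_nonneg demand_below_mono[of j "Suc j"] demand_below_le_excess[of "Suc j"] in auto)
  finally show ?thesis
    using demand_below_Suc assms by simp
qed

lemma inside_out_col_sum: "(\<Sum>i\<le>m. io i j) = p n j"
proof (cases "j \<le> m")
  case True
  then show ?thesis by (simp add: inside_out_diag_block)
next
  case False
  then show ?thesis
    by (cases "j \<le> n") (auto simp: inside_out_col_offdiag inside_out_col_outside p_eq_0)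
qed

lemma inside_out_plan: "io \<in> transport_plans p m n"
  unfolding transport_plans_def
  using inside_out_row_outside inside_out_col_outside inside_out_nonneg inside_out_row_sum inside_out_col_sum by auto

end

context nested_distributions
begin

lemma inside_out_pairI: "m \<le> n \<Longrightarrow> inside_out_pair p m n"
  by (simp add: inside_out_pair_def inside_out_pair_axioms_def nested_distributions_axioms)

end

context inside_out_pair
begin

lemma inside_out_nonzero:
  assumes "i \<le> m" "m < j" "j \<le> n" "io i j \<noteq> 0"
  shows "demand_below j < supply_above i" "supply_above (Suc i) < demand_below (Suc j)"
  using assms inside_out_offdiag[OF assms(1-3)]
  by (auto simp: overlap_def max_def min_def split: if_splits)

lemma transport_cost_inside_out_diag:
  assumes "m = n" "\<And>i. i \<le> m \<Longrightarrow> c i i = 0"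
  shows "transport_cost c m n io = 0"
proof -
  have "io i j * c i j = 0" if "i \<le> m" "j \<le> n" for i j
    using that assms inside_out_diag_block[of i j] by auto
  then show ?thesis
    unfolding transport_cost_def by (intro sum.neutral ballI) simp
qed

end

section \<open>Cross masses of the Inside-Out plan\<close>

context nested_distributions
begin

(* The mass that the Inside-Out plan for (pi^a, pi^b) sends from {..x} to {y<..},
   see cross_mass_inside_out. *)

definition span_mass :: "nat \<Rightarrow> nat \<Rightarrow> nat \<Rightarrow> nat \<Rightarrow> real" where
  "span_mass a b x y = min (cdf a (min x a) - cdf b (min x a)) (1 - cdf b (max y a))"

lemma span_mass_right: "a \<le> x \<Longrightarrow> x < y \<Longrightarrow> span_mass a b x y = 1 - cdf b y"
  using cdf_eq_1[of a a] cdf_mono[of a y b] by (simp add: span_mass_def min_def max_def)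

lemma span_mass_left:
  assumes "x < y" "y \<le> a" "a \<le> b"
  shows "span_mass a b x y = cdf a x - cdf b x"
  using assms cdf_diff_antimono[of x a a b] cdf_eq_1[of a a] by (simp add: span_mass_def min_def max_def)

lemma span_mass_across: "x \<le> a \<Longrightarrow> a \<le> y \<Longrightarrow> span_mass a b x y = min (cdf a x - cdf b x) (1 - cdf b y)"
  by (simp add: span_mass_def min_absorb1 max_absorb1)

lemma span_mass_quadrangle:
  assumes "Suc m \<le> n" "x < y"
  shows "span_mass m n x y + span_mass (Suc m) (Suc n) x y \<le> span_mass m (Suc n) x y + span_mass (Suc m) n x y"
proof -
  consider "Suc m \<le> x" | "x \<le> m" "Suc m \<le> y" | "y \<le> m"
    using assms(2) by linarith
  then show ?thesis
  proof cases
    case 1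
    then show ?thesis
      using assms by (simp add: span_mass_right)
  next
    case 2
    have "cdf n x - cdf (Suc n) x \<le> cdf n y - cdf (Suc n) y \<or>
        (cdf n y = 1 \<and> cdf (Suc n) y = 1 \<and> cdf n x \<le> cdf (Suc m) x)"
    proof (cases "y \<le> n")
      case True
      then show ?thesis using cdf_diff_antimono[of x y n "Suc n"] assms(2) by simp
    next
      case False
      then show ?thesis using cdf_eq_1[of n y] cdf_eq_1[of "Suc n" y] cdf_antimono[OF assms(1)] by simp
    qed
    then show ?thesis
      using 2 cdf_antimono[of m "Suc m" x] cdf_antimono[of n "Suc n" x] cdf_antimono[of n "Suc n" y]
      by (auto simp: span_mass_across min_def)
  next
    case 3
    then show ?thesis
      using assms by (simp add: span_mass_left)
  qed
qed

end

context inside_out_pair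
begin

lemma inside_out_row_sum_atMost: "n \<le> N \<Longrightarrow> (\<Sum>j\<le>N. io i j) = p m i"
  using sum_atMost_split[of n N "io i"] by (simp add: inside_out_row_sum inside_out_col_outside)

lemma inside_out_col_sum_atMost: "m \<le> N \<Longrightarrow> (\<Sum>i\<le>N. io i j) = p n j"
  using sum_atMost_split[of m N "\<lambda>i. io i j"] by (simp add: inside_out_col_sum inside_out_row_outside)

lemma cross_mass_inside_out_cut:
  assumes "n \<le> N" "a \<le> N"
  shows "cross_mass io N a a = cdf m a - cdf n a"
proof -
  have rows: "(\<Sum>i\<le>a. \<Sum>j\<le>N. io i j) = cdf m a"
    using assms(1) by (simp add: inside_out_row_sum_atMost cdf_def)
  have "(\<Sum>i\<le>a. \<Sum>j\<le>a. io i j) = (\<Sum>j\<le>a. \<Sum>i\<le>a. io i j)"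
    by (rule sum.swap)
  also have "\<dots> = (\<Sum>j\<le>a. \<Sum>i\<le>N. io i j)"
    by (intro sum.cong refl sum.mono_neutral_left) (use assms(2) in \<open>auto simp: inside_out_lower\<close>)
  also have "\<dots> = cdf n a"
    using m_le_n assms(1) by (simp add: inside_out_col_sum_atMost cdf_def)
  finally have block: "(\<Sum>i\<le>a. \<Sum>j\<le>a. io i j) = cdf n a" .
  have "(\<Sum>i\<le>a. \<Sum>j\<le>N. io i j) = (\<Sum>i\<le>a. \<Sum>j\<le>a. io i j) + cross_mass io N a a"
    unfolding cross_mass_def sum.distrib[symmetric] by (intro sum.cong refl sum_atMost_split assms(2))
  then show ?thesis
    using rows block by simp
qed

lemma inside_out_row_tail_from:
  assumes "i \<le> m" "i < y" "n \<le> N"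
  defines "y' \<equiv> min (max y m) n"
  shows "(\<Sum>j\<in>{y<..N}. io i j)
       = overlap (demand_below (Suc y')) excess (supply_above (Suc i)) (supply_above i)"
proof -
  have "(\<Sum>j\<in>{y<..N}. io i j) = (\<Sum>j\<in>{y'<..n}. io i j)"
  proof (rule sum.mono_neutral_right)
    show "{y'<..n} \<subseteq> {y<..N}"
      using assms by auto
    show "\<forall>j\<in>{y<..N} - {y'<..n}. io i j = 0"
      using assms by (auto simp: inside_out_col_outside inside_out_diag_block)
  qed simp
  also have "\<dots> = (\<Sum>j=Suc y'..<Suc n.
      overlap (supply_above (Suc i)) (supply_above i) (demand_below j) (demand_below (Suc j)))"
    using assms by (intro sum.cong) (auto simp: inside_out_offdiag)
  also have "\<dots> = overlap (supply_above (Suc i)) (supply_above i) (demand_below (Suc y')) (demand_below (Suc n))"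
    using supply_above_antimono[of i "Suc i"] assms
    by (intro sum_overlap_incseq) (auto simp: demand_below_Suc p_nonneg)
  finally show ?thesis
    by (simp add: demand_below_Suc_n overlap_commute)
qed

lemma cross_mass_inside_out:
  assumes "n \<le> N" "x < y"
  shows "cross_mass io N x y = span_mass m n x y"
proof -
  define x' y' where "x' = min x m" and "y' = min (max y m) n"
  have "cross_mass io N x y
      = (\<Sum>i=0..<Suc x'. overlap (demand_below (Suc y')) excess (supply_above (Suc i)) (supply_above i))"
    unfolding cross_mass_def
    by (rule sum.mono_neutral_cong_right)
      (use assms in \<open>auto simp: x'_def y'_def inside_out_row_tail_from inside_out_row_outside\<close>)
  also have "\<dots> = overlap (demand_below (Suc y')) excess (supply_above (Suc x')) (supply_above 0)"
    using demand_below_le_excess[of "Suc y'"]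
    by (intro sum_overlap_decseq) (auto simp: y'_def intro: supply_above_antimono)
  also have "\<dots> = min (excess - supply_above (Suc x')) (excess - demand_below (Suc y'))"
    using supply_above_le_excess demand_below_le_excess[of "Suc y'"]
    by (auto simp: overlap_def supply_above_0 y'_def)
  also have "excess - supply_above (Suc x') = cdf m x' - cdf n x'"
    by (simp add: supply_above_Suc_eq x'_def)
  also have "excess - demand_below (Suc y') = 1 - cdf n (max y m)"
    using m_le_n cdf_eq_1[of n "max y m"] cdf_eq_1[of n n]
    by (cases "max y m \<le> n") (auto simp: demand_below_Suc_eq excess_eq y'_def)
  finally show ?thesis
    by (simp add: span_mass_def x'_def)
qed

end

context nested_distributions
begin

lemma transport_cost_inside_out_expansion:
  assumes "a \<le> b" "b \<le> N" "\<And>k. k \<le> N \<Longrightarrow> c k k = 0"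
  shows "transport_cost c a b (inside_out p a b)
       = (\<Sum>k<N. c k (Suc k) * (cdf a k - cdf b k))
       + (\<Sum>y<N. \<Sum>x<y. mixed_diff c x y * cross_mass (inside_out p a b) N x y)"
proof -
  interpret inside_out_pair p a b
    by (rule inside_out_pairI) fact
  have "transport_cost c a b io = transport_cost c N N io"
    using assms(1,2) by (intro transport_cost_extend[symmetric] inside_out_row_outside inside_out_col_outside) auto
  also have "\<dots> = (\<Sum>k<N. c k (Suc k) * cross_mass io N k k)
      + (\<Sum>y<N. \<Sum>x<y. mixed_diff c x y * cross_mass io N x y)"
    by (rule transport_cost_expansion) (use assms(3) inside_out_lower in auto)
  finally show ?thesis
    using assms(2) by (simp add: cross_mass_inside_out_cut)
qed

theorem inside_out_cost_quadrangle:
  assumes "Suc m \<le> n" and diag: "\<And>k. k \<le> Suc n \<Longrightarrow> c k k = 0"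
    and monge: "\<And>x y. x < y \<Longrightarrow> y \<le> n \<Longrightarrow> mixed_diff c x y \<le> 0"
  shows "transport_cost c m (Suc n) (inside_out p m (Suc n))
       + transport_cost c (Suc m) n (inside_out p (Suc m) n)
       \<le> transport_cost c m n (inside_out p m n)
       + transport_cost c (Suc m) (Suc n) (inside_out p (Suc m) (Suc n))"
proof -
  define cut where "cut a b = (\<Sum>k<Suc n. c k (Suc k) * (cdf a k - cdf b k))" for a b
  define M where "M a b x y = cross_mass (inside_out p a b) (Suc n) x y" for a b x y
  define span where "span a b = (\<Sum>y<Suc n. \<Sum>x<y. mixed_diff c x y * M a b x y)" for a b
  have cost: "transport_cost c a b (inside_out p a b) = cut a b + span a b"
    if "a \<le> b" "b \<le> Suc n" for a b
    unfolding cut_def span_def M_def by (rule transport_cost_inside_out_expansion[OF that diag])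
  have "cut m (Suc n) + cut (Suc m) n = cut m n + cut (Suc m) (Suc n)"
    by (simp add: cut_def sum.distrib[symmetric] algebra_simps)
  moreover have "span m (Suc n) + span (Suc m) n - (span m n + span (Suc m) (Suc n))
      = (\<Sum>y<Suc n. \<Sum>x<y. mixed_diff c x y
          * (M m (Suc n) x y + M (Suc m) n x y - M m n x y - M (Suc m) (Suc n) x y))"
    by (simp add: span_def sum.distrib sum_subtractf algebra_simps del: sum.lessThan_Suc)
  moreover have "\<dots> \<le> 0"
  proof (intro sum_nonpos mult_nonpos_nonneg)
    fix x y assume "y \<in> {..<Suc n}" "x \<in> {..<y}"
    then show "mixed_diff c x y \<le> 0"
      "0 \<le> M m (Suc n) x y + M (Suc m) n x y - M m n x y - M (Suc m) (Suc n) x y"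
      using monge span_mass_quadrangle[OF assms(1), of x y] assms(1)
      by (auto simp: M_def inside_out_pair.cross_mass_inside_out[OF inside_out_pairI])
  qed
  ultimately show ?thesis
    using assms(1) by (simp add: cost)
qed

end

section \<open>Optimality of the Inside-Out plan\<close>

locale inside_out_duality = inside_out_pair +
  fixes c :: "nat \<Rightarrow> nat \<Rightarrow> real"
  assumes m_less_n: "m < n"
    and cost_nonneg: "\<And>i j. i \<le> m \<Longrightarrow> j \<le> n \<Longrightarrow> 0 \<le> c i j"
    and cost_diag: "\<And>i. i \<le> m \<Longrightarrow> c i i = 0"
    and cost_monotone_monge: "monotone_monge_upto c n"
begin

definition demand_node :: "real \<Rightarrow> nat" where
  "demand_node t = (LEAST j. m < j \<and> (j = n \<or> t < demand_below (Suc j)))"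

lemma demand_node_bounds: "m < demand_node t" "demand_node t \<le> n"
proof -
  have "m < n \<and> (n = n \<or> t < demand_below (Suc n))"
    using m_less_n by simp
  then show "m < demand_node t" "demand_node t \<le> n"
    unfolding demand_node_def by (auto intro: LeastI2 Least_le)
qed

lemma demand_node_le: "m < j \<Longrightarrow> t < demand_below (Suc j) \<Longrightarrow> demand_node t \<le> j"
  unfolding demand_node_def by (rule Least_le) simp

lemma le_demand_node:
  assumes "m < j" "j \<le> n" "demand_below j < t"
  shows "j \<le> demand_node t"
proof (rule ccontr)
  assume "\<not> j \<le> demand_node t"
  moreover have "demand_node t = n \<or> t < demand_below (Suc (demand_node t))"
    using LeastI[of "\<lambda>j. m < j \<and> (j = n \<or> t < demand_below (Suc j))" n] m_less_n
    unfolding demand_node_def by simp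
  ultimately show False
    using assms demand_below_mono[of "Suc (demand_node t)" j] by auto
qed

(* The dual certificate: between rows r + 1 and r the supply potential changes by the cost
   difference of these rows at the demand node into which the boundary of their supply blocks
   falls. By the Monge property this difference is the smallest one to the left of that node and
   the largest one to the right of it, which gives feasibility and complementary slackness. *)

definition boundary_node :: "nat \<Rightarrow> nat" where
  "boundary_node r = demand_node (supply_above (Suc r))"

definition price :: "nat \<Rightarrow> real" where
  "price r = c r (boundary_node r) - c (Suc r) (boundary_node r)"

definition supply_potential :: "nat \<Rightarrow> real" where
  "supply_potential i = (\<Sum>r=i..<m. price r)"

definition demand_potential :: "nat \<Rightarrow> real" where
  "demand_potential j =
     (if j \<le> m then - supply_potential j else Min ((\<lambda>i. c i j - supply_potential i) ` {..m}))"

lemma boundary_node_bounds: "m < boundary_node r" "boundary_node r \<le> n"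
  unfolding boundary_node_def by (rule demand_node_bounds)+

lemma supply_potential_diff:
  "i \<le> k \<Longrightarrow> k \<le> m \<Longrightarrow> supply_potential i - supply_potential k = (\<Sum>r=i..<k. price r)"
  unfolding supply_potential_def using sum.atLeastLessThan_concat[of i k m price] by simp

lemma price_nonneg: "r < m \<Longrightarrow> 0 \<le> price r"
  unfolding price_def
  using monotone_monge_upto_row_antimono[OF cost_monotone_monge, of r "Suc r" "boundary_node r"]
    boundary_node_bounds[of r] by simp

lemma price_le: "Suc r \<le> j \<Longrightarrow> j \<le> boundary_node r \<Longrightarrow> price r \<le> c r j - c (Suc r) j"
  unfolding price_def
  using monotone_monge_upto_quadrangle[OF cost_monotone_monge, of r "Suc r" j "boundary_node r"]
    boundary_node_bounds[of r] by simp

lemma price_ge: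
  "Suc r \<le> boundary_node r \<Longrightarrow> boundary_node r \<le> j \<Longrightarrow> j \<le> n \<Longrightarrow> c r j - c (Suc r) j \<le> price r"
  unfolding price_def
  using monotone_monge_upto_quadrangle[OF cost_monotone_monge, of r "Suc r" "boundary_node r" j]
  by simp

lemma potentials_feasible:
  assumes "i \<le> m" "j \<le> n"
  shows "supply_potential i + demand_potential j \<le> c i j"
proof (cases "j \<le> m")
  case False
  have "Min ((\<lambda>k. c k j - supply_potential k) ` {..m}) \<le> c i j - supply_potential i"
    using assms(1) by (intro Min_le) auto
  then show ?thesis
    using False by (simp add: demand_potential_def)
next
  case True
  show ?thesis
  proof (cases "i \<le> j")
    case True
    have "supply_potential i - supply_potential j = (\<Sum>r=i..<j. price r)"
      using True \<open>j \<le> m\<close> by (rule supply_potential_diff)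
    also have "\<dots> \<le> (\<Sum>r=i..<j. c r j - c (Suc r) j)"
    proof (rule sum_mono)
      fix r assume "r \<in> {i..<j}"
      then show "price r \<le> c r j - c (Suc r) j"
        using \<open>j \<le> m\<close> boundary_node_bounds[of r] by (intro price_le) auto
    qed
    also have "\<dots> = c i j"
      using sum_telescope_down[OF True, of "\<lambda>r. c r j"] cost_diag \<open>j \<le> m\<close> by simp
    finally show ?thesis
      using \<open>j \<le> m\<close> by (simp add: demand_potential_def)
  next
    case False
    have "0 \<le> (\<Sum>r=j..<i. price r)"
      using assms by (intro sum_nonneg price_nonneg) auto
    also have "\<dots> = supply_potential j - supply_potential i"
      using False assms by (intro supply_potential_diff[symmetric]) auto
    finally show ?thesis
      using \<open>j \<le> m\<close> cost_nonneg[OF assms] by (simp add: demand_potential_def)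
  qed
qed

lemma demand_potential_attained:
  assumes "i \<le> m" "m < j" "j \<le> n" "io i j \<noteq> 0" "k \<le> m"
  shows "c i j - supply_potential i \<le> c k j - supply_potential k"
proof (cases "i \<le> k")
  case True
  have "c i j - c k j = (\<Sum>r=i..<k. c r j - c (Suc r) j)"
    using sum_telescope_down[OF True, of "\<lambda>r. c r j"] by simp
  also have "\<dots> \<le> (\<Sum>r=i..<k. price r)"
  proof (rule sum_mono)
    fix r assume r: "r \<in> {i..<k}"
    have "supply_above (Suc r) < demand_below (Suc j)"
      using supply_above_antimono[of "Suc i" "Suc r"] inside_out_nonzero(2)[OF assms(1-4)] r by simp
    then have "boundary_node r \<le> j"
      unfolding boundary_node_def by (rule demand_node_le[OF assms(2)])
    then show "c r j - c (Suc r) j \<le> price r"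
      using price_ge boundary_node_bounds[of r] r assms by simp
  qed
  also have "\<dots> = supply_potential i - supply_potential k"
    using True assms(5) by (rule supply_potential_diff[symmetric])
  finally show ?thesis by simp
next
  case False
  have "supply_potential k - supply_potential i = (\<Sum>r=k..<i. price r)"
    using False assms(1) by (intro supply_potential_diff) auto
  also have "\<dots> \<le> (\<Sum>r=k..<i. c r j - c (Suc r) j)"
  proof (rule sum_mono)
    fix r assume r: "r \<in> {k..<i}"
    have "demand_below j < supply_above (Suc r)"
      using supply_above_antimono[of "Suc r" i] inside_out_nonzero(1)[OF assms(1-4)] r by simp
    then have "j \<le> boundary_node r"
      unfolding boundary_node_def by (rule le_demand_node[OF assms(2,3)])
    then show "price r \<le> c r j - c (Suc r) j"
      using price_le r assms by simp
  qed
  also have "\<dots> = c k j - c i j"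
    using False sum_telescope_down[of k i "\<lambda>r. c r j"] by simp
  finally show ?thesis by simp
qed

lemma potentials_slack:
  assumes "i \<le> m" "j \<le> n" "io i j \<noteq> 0"
  shows "supply_potential i + demand_potential j = c i j"
proof (cases "j \<le> m")
  case True
  then have "i = j"
    using assms by (auto simp: inside_out_diag_block split: if_splits)
  then show ?thesis
    using True cost_diag by (simp add: demand_potential_def)
next
  case False
  have "Min ((\<lambda>k. c k j - supply_potential k) ` {..m}) = c i j - supply_potential i"
    using assms False demand_potential_attained by (intro Min_eqI) auto
  then show ?thesis
    using False by (simp add: demand_potential_def)
qed

end

context inside_out_pair
begin

theorem inside_out_optimal:
  assumes "\<And>i j. i \<le> m \<Longrightarrow> j \<le> n \<Longrightarrow> 0 \<le> c i j" "\<And>i. i \<le> m \<Longrightarrow> c i i = 0"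
    and "monotone_monge_upto c n" "z \<in> transport_plans p m n"
  shows "transport_cost c m n io \<le> transport_cost c m n z"
proof (cases "m = n")
  case True
  then show ?thesis
    using transport_cost_inside_out_diag transport_cost_nonneg assms by metis
next
  case False
  interpret inside_out_duality p m n c
    using inside_out_pair_axioms False m_le_n assms
    by (simp add: inside_out_duality_def inside_out_duality_axioms_def)
  show ?thesis
    using inside_out_plan assms(4) potentials_feasible potentials_slack
    by (rule transport_cost_le_of_potentials)
qed

end

section \<open>Redirecting supply to the next node\<close>

context inside_out_pair
begin

(* Passing from pi^m to pi^(m+1) removes p m k - p (Suc m) k from node k; by (H) this is the
   fraction redirect_fraction k of the residual supply sigma k. If sigma k = 0 the removed mass is
   0 as well, so the junk value of the division is harmless. *)

definition redirect_fraction :: "nat \<Rightarrow> real" where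
  "redirect_fraction k = (p m k - p (Suc m) k) / \<sigma> k"

definition redirected_mass :: "nat \<Rightarrow> nat \<Rightarrow> real" where
  "redirected_mass i j = (if m < j then redirect_fraction i * io i j else 0)"

definition redirected_plan :: "nat \<Rightarrow> nat \<Rightarrow> real" where
  "redirected_plan i j =
     (if i \<le> m then io i j - redirected_mass i j
      else if i = Suc m then (\<Sum>k\<le>m. redirected_mass k j) else 0)"

context
  assumes Suc_m_le_n: "Suc m \<le> n"
begin

lemma redirect_fraction_bounds:
  assumes "k \<le> m"
  shows "redirect_fraction k * \<sigma> k = p m k - p (Suc m) k" "0 \<le> redirect_fraction k" "redirect_fraction k \<le> 1"
proof -
  have "0 \<le> p m k - p (Suc m) k" "p m k - p (Suc m) k \<le> \<sigma> k"
    using p_Suc_le[OF assms] p_antimono[OF Suc_m_le_n, of k] assms by (auto simp: io_sigma_def)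
  then show "redirect_fraction k * \<sigma> k = p m k - p (Suc m) k" "0 \<le> redirect_fraction k"
    "redirect_fraction k \<le> 1"
    by (auto simp: redirect_fraction_def divide_le_eq_1)
qed

lemma redirected_mass_bounds: "i \<le> m \<Longrightarrow> 0 \<le> redirected_mass i j \<and> redirected_mass i j \<le> io i j"
  using redirect_fraction_bounds[of i] inside_out_nonneg[of i j]
  by (simp add: redirected_mass_def mult_left_le_one_le)

lemma redirected_mass_row_sum: "i \<le> m \<Longrightarrow> (\<Sum>j\<le>n. redirected_mass i j) = p m i - p (Suc m) i"
  using sum_atMost_split[OF m_le_n, of "redirected_mass i"] inside_out_row_tail[of i] redirect_fraction_bounds(1)[of i]
  by (simp add: redirected_mass_def sum_distrib_left[symmetric])

lemma redirected_plan_mem: "redirected_plan \<in> transport_plans p (Suc m) n"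
  unfolding transport_plans_def
proof (intro CollectI conjI allI impI)
  fix i j assume "Suc m < i \<or> n < j"
  then show "redirected_plan i j = 0"
    by (auto simp: redirected_plan_def redirected_mass_def inside_out_col_outside)
next
  fix i j assume "i \<le> Suc m" "j \<le> n"
  show "0 \<le> redirected_plan i j"
    using redirected_mass_bounds by (auto simp: redirected_plan_def intro: sum_nonneg)
next
  fix i assume "i \<le> Suc m"
  show "(\<Sum>j\<le>n. redirected_plan i j) = p (Suc m) i"
  proof (cases "i \<le> m")
    case True
    then show ?thesis
      by (simp add: redirected_plan_def sum_subtractf inside_out_row_sum redirected_mass_row_sum)
  next
    case False
    then have "i = Suc m"
      using \<open>i \<le> Suc m\<close> by simp
    have "(\<Sum>j\<le>n. \<Sum>k\<le>m. redirected_mass k j) = (\<Sum>k\<le>m. p m k - p (Suc m) k)"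
      by (subst sum.swap) (simp add: redirected_mass_row_sum)
    also have "\<dots> = p (Suc m) (Suc m)"
      using sum_p[of m] sum_p[of "Suc m"] by (simp add: sum_subtractf)
    finally show ?thesis
      using \<open>i = Suc m\<close> by (simp add: redirected_plan_def)
  qed
next
  fix j assume "j \<le> n"
  then show "(\<Sum>i\<le>Suc m. redirected_plan i j) = p n j"
    by (simp add: redirected_plan_def sum_subtractf inside_out_col_sum)
qed

lemma transport_cost_redirected_plan:
  assumes "\<And>i j. i \<le> m \<Longrightarrow> m < j \<Longrightarrow> j \<le> n \<Longrightarrow> c (Suc m) j \<le> c i j"
  shows "transport_cost c (Suc m) n redirected_plan \<le> transport_cost c m n io"
proof -
  have "transport_cost c (Suc m) n redirected_plan
      = transport_cost c m n io - (\<Sum>i\<le>m. \<Sum>j\<le>n. redirected_mass i j * c i j)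
        + (\<Sum>i\<le>m. \<Sum>j\<le>n. redirected_mass i j * c (Suc m) j)"
    by (simp add: transport_cost_def redirected_plan_def left_diff_distrib sum_subtractf
        sum_distrib_right sum.distrib sum.swap[of _ "{..n}"])
  also have "(\<Sum>i\<le>m. \<Sum>j\<le>n. redirected_mass i j * c (Suc m) j) \<le> (\<Sum>i\<le>m. \<Sum>j\<le>n. redirected_mass i j * c i j)"
  proof (intro sum_mono)
    fix i j assume "i \<in> {..m}" "j \<in> {..n}"
    then show "redirected_mass i j * c (Suc m) j \<le> redirected_mass i j * c i j"
      using assms[of i j] redirected_mass_bounds[of i j]
      by (cases "m < j") (auto simp: redirected_mass_def intro: mult_left_mono)
  qed
  finally show ?thesis by simp
qed

end

end

section \<open>The recursion for the distances\<close>

lemma D_Suc_Suc: "D p (Suc m) (Suc n) = Inf (transport_cost (D p) m n ` transport_plans p m n)"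
  by (simp add: transport_cost_def)

declare D.simps(4) [simp del]

context nested_distributions
begin

lemma product_plan_mem: "(\<lambda>i j. p m i * p n j) \<in> transport_plans p m n"
  unfolding transport_plans_def
  by (auto simp: p_nonneg p_eq_0 sum_p sum_distrib_left[symmetric] sum_distrib_right[symmetric])

lemma D_nonneg: "0 \<le> D p a b"
proof (induction a arbitrary: b rule: less_induct)
  case (less a)
  show ?case
  proof (cases "a = 0 \<or> b = 0")
    case True
    then show ?thesis
      by (cases a; cases b) auto
  next
    case False
    then obtain m n where "a = Suc m" "b = Suc n"
      by (metis not0_implies_Suc)
    have "transport_cost (D p) m n ` transport_plans p m n \<noteq> {}"
      using product_plan_mem by blast
    then have "0 \<le> Inf (transport_cost (D p) m n ` transport_plans p m n)"
      using less \<open>a = Suc m\<close> by (intro cInf_greatest) (auto intro!: transport_cost_nonneg)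
    then show ?thesis
      by (simp add: \<open>a = Suc m\<close> \<open>b = Suc n\<close> D_Suc_Suc)
  qed
qed

lemma D_Suc_Suc_le: "z \<in> transport_plans p m n \<Longrightarrow> D p (Suc m) (Suc n) \<le> transport_cost (D p) m n z"
  unfolding D_Suc_Suc
  by (rule cInf_lower) (auto intro!: bdd_belowI transport_cost_nonneg D_nonneg)

lemma D_Suc_Suc_eq_minimum:
  assumes "w \<in> transport_plans p m n"
    and "\<And>z. z \<in> transport_plans p m n \<Longrightarrow> transport_cost (D p) m n w \<le> transport_cost (D p) m n z"
  shows "D p (Suc m) (Suc n) = transport_cost (D p) m n w"
  unfolding D_Suc_Suc using assms by (intro cInf_eq_minimum) auto

lemma D_diag: "D p k k = 0"
proof (induction k rule: less_induct)
  case (less k)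
  show ?case
  proof (cases k)
    case (Suc n)
    interpret inside_out_pair p n n
      by (rule inside_out_pairI) simp
    have "D p (Suc n) (Suc n) \<le> transport_cost (D p) n n io"
      using inside_out_plan by (rule D_Suc_Suc_le)
    also have "\<dots> = 0"
      using less Suc by (intro transport_cost_inside_out_diag) auto
    finally show ?thesis
      using D_nonneg[of k k] Suc by simp
  qed simp
qed

lemma D_1_Suc: "D p (Suc 0) (Suc n) = 1 - p n 0"
proof -
  \<comment> \<open>pi^0 is a point mass, so all plans from it have the same cost.\<close>
  have cost: "transport_cost (D p) 0 n z = 1 - p n 0" if "z \<in> transport_plans p 0 n" for z
  proof -
    have "z 0 j = p n j" if "j \<le> n" for j
      using \<open>z \<in> transport_plans p 0 n\<close> that unfolding transport_plans_def by auto
    moreover have "D p 0 j = (if j = 0 then 0 else 1)" for j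
      by (cases j) auto
    ultimately have "transport_cost (D p) 0 n z = (\<Sum>j\<le>n. p n j * (if j = 0 then 0 else 1))"
      by (simp add: transport_cost_def)
    also have "\<dots> = (\<Sum>j\<le>n. p n j - (if j = 0 then p n 0 else 0))"
      by (intro sum.cong) auto
    also have "\<dots> = (\<Sum>j\<le>n. p n j) - p n 0"
      by (simp add: sum_subtractf)
    finally show ?thesis
      by (simp add: sum_p)
  qed
  interpret inside_out_pair p 0 n
    by (rule inside_out_pairI) simp
  show ?thesis
    using inside_out_plan cost by (subst D_Suc_Suc_eq_minimum[OF inside_out_plan]) auto
qed

end

context nested_distributions
begin

lemma inside_out_optimal_D:
  assumes "monotone_monge_upto (D p) n" "m \<le> n" "z \<in> transport_plans p m n"
  shows "transport_cost (D p) m n (inside_out p m n) \<le> transport_cost (D p) m n z"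
  using inside_out_pair.inside_out_optimal[OF inside_out_pairI[OF assms(2)]] assms D_nonneg D_diag
  by blast

lemma D_Suc_Suc_inside_out:
  assumes "monotone_monge_upto (D p) n" "m \<le> n"
  shows "D p (Suc m) (Suc n) = transport_cost (D p) m n (inside_out p m n)"
  using inside_out_pair.inside_out_plan[OF inside_out_pairI[OF assms(2)]] inside_out_optimal_D[OF assms]
  by (rule D_Suc_Suc_eq_minimum)

lemma D_Suc_le_Suc_column:
  assumes "monotone_monge_upto (D p) N" "x \<le> N"
  shows "D p (Suc x) (Suc N) \<le> D p x (Suc N)"
proof (cases x)
  case 0
  then show ?thesis
    using D_1_Suc[of N] p_nonneg[of N 0] by simp
next
  case (Suc m)
  interpret inside_out_pair p m N
    by (rule inside_out_pairI) (use assms Suc in simp)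
  have "D p (Suc (Suc m)) (Suc N) \<le> transport_cost (D p) (Suc m) N redirected_plan"
    using assms Suc by (intro D_Suc_Suc_le redirected_plan_mem) simp
  also have "\<dots> \<le> transport_cost (D p) m N io"
    using assms Suc by (intro transport_cost_redirected_plan monotone_monge_upto_row_antimono[OF assms(1)]) auto
  also have "\<dots> = D p (Suc m) (Suc N)"
    using assms Suc by (simp add: D_Suc_Suc_inside_out)
  finally show ?thesis
    using Suc by simp
qed

lemma mixed_diff_D_Suc_row:
  assumes "monotone_monge_upto (D p) (Suc n)" "x \<le> n"
  shows "mixed_diff (D p) x (Suc n) \<le> 0"
proof (cases x)
  case 0
  then show ?thesis
    using D_1_Suc[of "Suc n"] D_1_Suc[of n] p_Suc_le[of 0 n] by (simp add: mixed_diff_def)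
next
  case (Suc m)
  have "monotone_monge_upto (D p) n"
    using assms(1) by (rule monotone_monge_upto_antimono) simp
  then have "mixed_diff (D p) x (Suc n)
      = transport_cost (D p) m (Suc n) (inside_out p m (Suc n))
      - transport_cost (D p) (Suc m) (Suc n) (inside_out p (Suc m) (Suc n))
      - transport_cost (D p) m n (inside_out p m n)
      + transport_cost (D p) (Suc m) n (inside_out p (Suc m) n)"
    using assms Suc by (simp add: mixed_diff_def D_Suc_Suc_inside_out)
  also have "\<dots> \<le> 0"
    using inside_out_cost_quadrangle[of m n "D p"] assms Suc D_diag
    by (simp add: monotone_monge_upto_def)
  finally show ?thesis .
qed

lemma monotone_monge_upto_D: "monotone_monge_upto (D p) N"
proof (induction N)
  case 0
  then show ?case
    by (simp add: monotone_monge_upto_def)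
next
  case (Suc N)
  show ?case
    unfolding monotone_monge_upto_def
  proof (intro conjI allI impI)
    fix x y assume "x < y" "y \<le> Suc N"
    then show "D p (Suc x) y \<le> D p x y"
      using Suc D_Suc_le_Suc_column[OF Suc, of x]
      by (cases "y = Suc N") (auto simp: monotone_monge_upto_def)
  next
    fix x y assume "x < y" "y < Suc N"
    then show "mixed_diff (D p) x y \<le> 0"
      using Suc mixed_diff_D_Suc_row[of "N - 1" x]
      by (cases "y = N") (auto simp: monotone_monge_upto_def)
  qed
qed

end

lemma plan_cost_eq_transport_cost: "plan_cost p m n z = transport_cost (D p) m n z"
  by (simp add: plan_cost_def transport_cost_def d_def)

theorem theorem5:
  fixes p :: "nat \<Rightarrow> nat \<Rightarrow> real"
  assumes "is_distribution_seq p"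
    and "condH p"
  shows "(\<forall>i j k l :: int. -1 \<le> i \<and> i \<le> j \<and> j \<le> k \<and> k \<le> l \<longrightarrow>
            d p i l + d p j k \<le> d p i k + d p j l)
       \<and> (\<forall>m n :: nat. m \<le> n \<longrightarrow>
            inside_out p m n \<in> transport_plans p m n
          \<and> (\<forall>z \<in> transport_plans p m n. plan_cost p m n (inside_out p m n) \<le> plan_cost p m n z))"
proof -
  interpret nested_distributions p
    using assms by unfold_locales
  have quadrangle: "D p a e + D p b r \<le> D p a r + D p b e" if "a \<le> b" "b \<le> r" "r \<le> e" for a b r e
    using monotone_monge_upto_D that order.refl by (rule monotone_monge_upto_quadrangle)
  have "d p i l + d p j k \<le> d p i k + d p j l"
    if "-1 \<le> i" "i \<le> j" "j \<le> k" "k \<le> l" for i j k l :: int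
    unfolding d_def using that by (intro quadrangle nat_mono) simp_all
  moreover have "inside_out p m n \<in> transport_plans p m n" if "m \<le> n" for m n
    using inside_out_pairI[OF that] by (rule inside_out_pair.inside_out_plan)
  moreover have "plan_cost p m n (inside_out p m n) \<le> plan_cost p m n z"
    if "m \<le> n" "z \<in> transport_plans p m n" for m n z
    unfolding plan_cost_eq_transport_cost using monotone_monge_upto_D that by (rule inside_out_optimal_D)
  ultimately show ?thesis
    by blast
qed

end
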